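(* Let $(M_1,M_2)$ and $(\widehat M_1,\widehat M_2)$ be two states of a duplex network with $|M_\ell|=|\widehat M_\ell|$ for $\ell=1,2$, and let $\mathcal K$ be the associated layer-labeled meta-graph. Then every connected component of $\mathcal K$ is a simple path or a cycle, and along any path component the edge labels alternate $1,2,1,2,\dots$.
   Context: A duplex network consists of directed graphs $G_1=(V,E_1)$, $G_2=(V,E_2)$ on a common finite node set $V$. For $\ell\in\{1,2\}$, $\mathcal B_\ell$ is the bipartite graph with vertex classes $V^+=\{v^+:v\in V\}$, $V^-=\{v^-:v\in V\}$ and an edge $\{u^+,v^-\}$ for each $(u,v)\in E_\ell$; a state is a pair $(M_1,M_2)$ where $M_\ell$ is a matching in $\mathcal B_\ell$. For each $\ell$, let $H_\ell$ be the graph on $V^+\cup V^-$ with edge set $M_\ell\triangle\widehat M_\ell$. The layer-labeled meta-graph $\mathcal K$ is the undirected multigraph on node set $V$ obtained by adding, for each $\ell\in\{1,2\}$ and each path component of $H_\ell$ whose two endpoints are $x^-,y^-\in V^-$, an edge $\{x,y\}$ with label $\ell$ (cycle components add no edge). *)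

theory Defs
  imports Main
begin

text \<open>Vertices of the bipartite graphs: the copies v+ and v- of a node v.\<close>
datatype 'v side = Plus 'v | Minus 'v

definition sides :: "'v set \<Rightarrow> 'v side set" where
  "sides V = Plus ` V \<union> Minus ` V"

definition bip_edges :: "('v \<times> 'v) set \<Rightarrow> 'v side set set" where
  "bip_edges E = (\<lambda>(u, v). {Plus u, Minus v}) ` E"

definition is_matching :: "('v \<times> 'v) set \<Rightarrow> 'v side set set \<Rightarrow> bool" where
  "is_matching E M \<longleftrightarrow> M \<subseteq> bip_edges E \<and>
     (\<forall>e\<in>M. \<forall>f\<in>M. e \<noteq> f \<longrightarrow> e \<inter> f = {})"

definition symdiff :: "'a set \<Rightarrow> 'a set \<Rightarrow> 'a set" where
  "symdiff A B = (A - B) \<union> (B - A)"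

definition adj :: "'a set set \<Rightarrow> ('a \<times> 'a) set" where
  "adj D = {(a, b). {a, b} \<in> D}"

definition components :: "'a set \<Rightarrow> 'a set set \<Rightarrow> 'a set set" where
  "components W D = {{w \<in> W. (a, w) \<in> (adj D)\<^sup>*} | a. a \<in> W}"

definition is_path_on :: "'a set set \<Rightarrow> 'a set \<Rightarrow> 'a list \<Rightarrow> bool" where
  "is_path_on D C vs \<longleftrightarrow> distinct vs \<and> 2 \<le> length vs \<and> set vs = C \<and>
     {e \<in> D. e \<subseteq> C} = {{vs ! i, vs ! (i + 1)} | i. i + 1 < length vs}"

definition path_component :: "'a set \<Rightarrow> 'a set set \<Rightarrow> 'a set \<Rightarrow> 'a \<Rightarrow> 'a \<Rightarrow> bool" where
  "path_component W D C a b \<longleftrightarrow> C \<in> components W D \<and>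
     (\<exists>vs. is_path_on D C vs \<and> hd vs = a \<and> last vs = b)"

text \<open>Layer-labeled meta-graph K. H l is the edge set of H_l (l = 1,2).
  Edges of K are pairs (l, C) with C a path component of H_l with both endpoints in V-;
  the label of edge (l, C) is l.\<close>
definition meta_edges :: "'v set \<Rightarrow> (nat \<Rightarrow> 'v side set set) \<Rightarrow> (nat \<times> 'v side set) set" where
  "meta_edges V H = {(l, C). l \<in> {1, 2} \<and>
      (\<exists>x y. path_component (sides V) (H l) C (Minus x) (Minus y))}"

definition meta_ends :: "'v set \<Rightarrow> (nat \<Rightarrow> 'v side set set) \<Rightarrow> nat \<times> 'v side set \<Rightarrow> 'v set" where
  "meta_ends V H e = {x. \<exists>y. path_component (sides V) (H (fst e)) (snd e) (Minus x) (Minus y)}"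

definition mg_components :: "'v set \<Rightarrow> 'e set \<Rightarrow> ('e \<Rightarrow> 'v set) \<Rightarrow> 'v set set" where
  "mg_components V KE ends =
     {{w \<in> V. (a, w) \<in> {(x, y). \<exists>e\<in>KE. ends e = {x, y}}\<^sup>*} | a. a \<in> V}"

end

theory Submission
  imports Defs
begin

text \<open>A meta-edge labelled \<open>l\<close> is a component of \<open>H l\<close>, and components are disjoint, so
  every node is an end of at most one meta-edge of each label: \<open>\<K>\<close> is a loopless multigraph
  whose edges are properly coloured with the two labels, hence has maximum degree two.
  In such a graph take a longest path inside a component. An edge leaving its last vertex
  and not on the path cannot reach a new vertex (the path would grow) nor an interior
  vertex (which already has degree two), so it returns to the first vertex and closes a
  cycle. Otherwise no edge leaves either end, and the path is the whole component; its
  consecutive edges share a vertex, so their labels alternate.\<close>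

lemma rtrancl_class_eq:
  assumes "sym R" and "(a, x) \<in> R\<^sup>*"
  shows "{w \<in> W. (a, w) \<in> R\<^sup>*} = {w \<in> W. (x, w) \<in> R\<^sup>*}"
proof -
  have "(x, a) \<in> R\<^sup>*"
    using assms by (meson sym_rtrancl symD)
  then show ?thesis
    using assms(2) by (auto intro: rtrancl_trans)
qed

lemma components_eq_if_common:
  assumes "C1 \<in> components W D" "C2 \<in> components W D" "x \<in> C1" "x \<in> C2"
  shows "C1 = C2"
proof -
  have sym: "sym (adj D)"
    by (auto simp: sym_def adj_def insert_commute)
  have "C = {w \<in> W. (x, w) \<in> (adj D)\<^sup>*}" if "C \<in> components W D" "x \<in> C" for C
    using that rtrancl_class_eq[OF sym] unfolding components_def by blast
  then show ?thesis
    using assms by blast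
qed

subsection \<open>Simple paths in a graph\<close>

lemma path_edges_rev:
  "{{rev vs ! i, rev vs ! (i + 1)} | i. i + 1 < length vs}
     = {{vs ! i, vs ! (i + 1)} | i. i + 1 < length vs}"
proof -
  have sub: "{{rev xs ! i, rev xs ! (i + 1)} | i. i + 1 < length xs}
      \<subseteq> {{xs ! i, xs ! (i + 1)} | i. i + 1 < length xs}" for xs :: "'a list"
  proof
    fix f assume "f \<in> {{rev xs ! i, rev xs ! (i + 1)} | i. i + 1 < length xs}"
    then obtain i where i: "i + 1 < length xs" "f = {rev xs ! i, rev xs ! (i + 1)}"
      by blast
    define j where "j = length xs - 2 - i"
    have "j + 1 < length xs" "j + 1 = length xs - 1 - i"
      using i(1) unfolding j_def by arith+
    moreover have "f = {xs ! j, xs ! (j + 1)}"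
      using i calculation(2) by (simp add: rev_nth j_def insert_commute Suc_diff_Suc)
    ultimately show "f \<in> {{xs ! i, xs ! (i + 1)} | i. i + 1 < length xs}"
      by blast
  qed
  show ?thesis
    using sub[of vs] sub[of "rev vs"] by auto
qed

lemma is_path_on_rev: "is_path_on D C vs \<Longrightarrow> is_path_on D C (rev vs)"
  by (simp add: is_path_on_def path_edges_rev[simplified])

lemma is_path_onD:
  assumes "is_path_on D C vs"
  shows "distinct vs" "2 \<le> length vs" "set vs = C" "vs \<noteq> []"
proof -
  show "distinct vs" "2 \<le> length vs" "set vs = C"
    using assms by (simp_all add: is_path_on_def)
  then show "vs \<noteq> []"
    by auto
qed

lemma is_path_on_edges:
  "is_path_on D C vs \<Longrightarrow> {e \<in> D. e \<subseteq> C} = {{vs ! i, vs ! (i + 1)} | i. i + 1 < length vs}"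
  by (simp add: is_path_on_def)

lemma is_path_on_edge:
  assumes "is_path_on D C vs" "i + 1 < length vs"
  shows "{vs ! i, vs ! (i + 1)} \<in> D" "{vs ! i, vs ! (i + 1)} \<subseteq> C"
proof -
  have "{vs ! i, vs ! (i + 1)} \<in> {e \<in> D. e \<subseteq> C}"
    unfolding is_path_on_edges[OF assms(1)] using assms(2) by blast
  then show "{vs ! i, vs ! (i + 1)} \<in> D" "{vs ! i, vs ! (i + 1)} \<subseteq> C"
    by simp_all
qed

lemma is_path_on_edge_at_hd:
  assumes path: "is_path_on D C vs" and "f \<in> D" "f \<subseteq> C" "hd vs \<in> f"
  shows "f = {vs ! 0, vs ! 1}"
proof -
  have "f \<in> {e \<in> D. e \<subseteq> C}"
    using assms(2,3) by simp
  then obtain i where i: "i + 1 < length vs" "f = {vs ! i, vs ! (i + 1)}"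
    unfolding is_path_on_edges[OF path] by blast
  have "distinct vs" "hd vs = vs ! 0"
    using is_path_onD[OF path] by (simp_all add: hd_conv_nth)
  with i assms(4) have "vs ! 0 = vs ! i \<or> vs ! 0 = vs ! (i + 1)"
    by auto
  moreover have "vs ! 0 \<noteq> vs ! (i + 1)"
    using nth_eq_iff_index_eq[OF \<open>distinct vs\<close>, of 0 "i + 1"] i(1) is_path_onD(4)[OF path]
    by simp
  ultimately have "i = 0"
    using nth_eq_iff_index_eq[OF \<open>distinct vs\<close>, of 0 i] i(1) is_path_onD(4)[OF path]
    by simp
  with i show ?thesis
    by simp
qed

text \<open>An interior vertex of a path lies on two edges, an end on only one.\<close>

lemma is_path_on_hd_endpoint:
  assumes path: "is_path_on D C vs" and path': "is_path_on D C vs'"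
  shows "hd vs' \<in> {hd vs, last vs}"
proof (rule ccontr)
  assume not_end: "hd vs' \<notin> {hd vs, last vs}"
  note vs = is_path_onD[OF path]
  have "hd vs' \<in> set vs"
    using is_path_onD(3,4)[OF path'] vs(3) hd_in_set by blast
  then obtain k where k: "k < length vs" "vs ! k = hd vs'"
    by (auto simp: in_set_conv_nth)
  have "hd vs = vs ! 0" "last vs = vs ! (length vs - 1)"
    using vs(4) by (simp_all add: hd_conv_nth last_conv_nth)
  with not_end k(2) have "vs ! k \<noteq> vs ! 0" "vs ! k \<noteq> vs ! (length vs - 1)"
    by auto
  then have "k \<noteq> 0" "k \<noteq> length vs - 1"
    by metis+
  with k(1) have "0 < k" "k + 1 < length vs"
    by auto
  then have "Suc (k - 1) = k"
    by simp
  have "{vs ! (k - 1), vs ! k} = {vs' ! 0, vs' ! 1}"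
    using is_path_on_edge[OF path, of "k - 1"] \<open>Suc (k - 1) = k\<close> \<open>k + 1 < length vs\<close> k(2)
    by (intro is_path_on_edge_at_hd[OF path']) simp_all
  moreover have "{vs ! k, vs ! (k + 1)} = {vs' ! 0, vs' ! 1}"
    using is_path_on_edge[OF path, of k] \<open>k + 1 < length vs\<close> k(2)
    by (intro is_path_on_edge_at_hd[OF path']) simp_all
  moreover have "vs ! (k - 1) \<notin> {vs ! k, vs ! (k + 1)}"
    using nth_eq_iff_index_eq[OF vs(1), of "k - 1" k] nth_eq_iff_index_eq[OF vs(1), of "k - 1" "k + 1"]
      \<open>0 < k\<close> \<open>k + 1 < length vs\<close> by auto
  ultimately show False
    by auto
qed

lemma path_component_rev: "path_component W D C a b \<Longrightarrow> path_component W D C b a"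
  unfolding path_component_def
  by (metis is_path_on_rev hd_rev last_rev)

lemma path_component_end_cases:
  "path_component W D C a b \<Longrightarrow> path_component W D C c d \<Longrightarrow> c \<in> {a, b}"
  unfolding path_component_def by (metis is_path_on_hd_endpoint)

lemma path_component_ends:
  assumes "path_component W D C a b"
  shows "a \<noteq> b" "a \<in> C" "b \<in> C" "C \<subseteq> W"
proof -
  obtain vs where vs: "C \<in> components W D" "is_path_on D C vs" "hd vs = a" "last vs = b"
    using assms unfolding path_component_def by blast
  note vs' = is_path_onD[OF vs(2)]
  have "hd vs \<noteq> last vs"
    using vs' nth_eq_iff_index_eq[OF vs'(1), of 0 "length vs - 1"]
    by (simp add: hd_conv_nth last_conv_nth)
  with vs vs' show "a \<noteq> b" "a \<in> C" "b \<in> C"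
    by auto
  show "C \<subseteq> W"
    using vs(1) unfolding components_def by blast
qed

subsection \<open>The meta-graph is properly coloured\<close>

lemma meta_ends_doubleton:
  assumes "e \<in> meta_edges V H"
  shows "\<exists>x y. x \<noteq> y \<and> meta_ends V H e = {x, y} \<and> x \<in> V \<and> y \<in> V"
proof -
  obtain l C x y where e: "e = (l, C)"
    and p: "path_component (sides V) (H l) C (Minus x) (Minus y)"
    using assms unfolding meta_edges_def by blast
  have "meta_ends V H e = {x, y}"
  proof (intro set_eqI iffI)
    fix z assume "z \<in> meta_ends V H e"
    then obtain w where "path_component (sides V) (H l) C (Minus z) (Minus w)"
      unfolding meta_ends_def e by auto
    then have "Minus z \<in> {Minus x, Minus y}"
      by (rule path_component_end_cases[OF p])
    then show "z \<in> {x, y}"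
      by auto
  next
    fix z assume "z \<in> {x, y}"
    then show "z \<in> meta_ends V H e"
      using p path_component_rev[OF p] unfolding meta_ends_def e by auto
  qed
  moreover have "x \<noteq> y" "x \<in> V" "y \<in> V"
    using path_component_ends[OF p] by (auto simp: sides_def)
  ultimately show ?thesis
    by blast
qed

lemma meta_edges_eq_if_same_label:
  assumes "x \<in> meta_ends V H e1" "x \<in> meta_ends V H e2" "fst e1 = fst e2"
  shows "e1 = e2"
proof -
  have comp: "snd e \<in> components (sides V) (H (fst e))" "Minus x \<in> snd e"
    if x: "x \<in> meta_ends V H e" for e
  proof -
    obtain y where p: "path_component (sides V) (H (fst e)) (snd e) (Minus x) (Minus y)"
      using x unfolding meta_ends_def by blast
    show "snd e \<in> components (sides V) (H (fst e))"
      using p unfolding path_component_def by (rule conjunct1)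
    show "Minus x \<in> snd e"
      by (rule path_component_ends(2)[OF p])
  qed
  have "snd e1 = snd e2"
    using components_eq_if_common[OF comp(1)[OF assms(1)] _ comp(2)[OF assms(1)]]
      comp[OF assms(2)] assms(3) by simp
  with assms(3) show ?thesis
    by (simp add: prod_eq_iff)
qed

subsection \<open>Properly two-coloured multigraphs\<close>

definition is_mg_path :: "('e \<Rightarrow> 'v set) \<Rightarrow> 'e set \<Rightarrow> 'v list \<Rightarrow> 'e list \<Rightarrow> bool" where
  "is_mg_path ends KE vs es \<longleftrightarrow> distinct vs \<and> distinct es \<and> set es \<subseteq> KE
     \<and> length vs = length es + 1 \<and> (\<forall>i < length es. ends (es ! i) = {vs ! i, vs ! (i + 1)})"

definition spanned_by_alternating_path ::
    "(nat \<times> 'c) set \<Rightarrow> (nat \<times> 'c \<Rightarrow> 'v set) \<Rightarrow> 'v set \<Rightarrow> bool" where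
  "spanned_by_alternating_path KE ends C \<longleftrightarrow> (\<exists>vs es. distinct vs \<and> set vs = C \<and> distinct es
     \<and> set es = {e \<in> KE. ends e \<subseteq> C} \<and> length vs = length es + 1
     \<and> (\<forall>i < length es. ends (es ! i) = {vs ! i, vs ! (i + 1)})
     \<and> (\<forall>i. i + 1 < length es \<longrightarrow> fst (es ! i) \<noteq> fst (es ! (i + 1))))"

definition spanned_by_cycle :: "'e set \<Rightarrow> ('e \<Rightarrow> 'v set) \<Rightarrow> 'v set \<Rightarrow> bool" where
  "spanned_by_cycle KE ends C \<longleftrightarrow> (\<exists>vs es. distinct vs \<and> set vs = C \<and> distinct es
     \<and> set es = {e \<in> KE. ends e \<subseteq> C} \<and> length vs = length es \<and> 2 \<le> length vs
     \<and> (\<forall>i < length es. ends (es ! i) = {vs ! i, vs ! ((i + 1) mod length vs)}))"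

lemma is_mg_path_nth:
  assumes "is_mg_path ends KE vs es" "i < length es"
  shows "es ! i \<in> KE" "vs ! i \<in> ends (es ! i)" "vs ! (i + 1) \<in> ends (es ! i)"
  using assms unfolding is_mg_path_def by auto

lemma is_mg_path_hd_last:
  assumes "is_mg_path ends KE vs es"
  shows "hd vs = vs ! 0" "last vs = vs ! length es"
proof -
  have "length vs = length es + 1"
    using assms unfolding is_mg_path_def by simp
  moreover from this have "vs \<noteq> []"
    by auto
  ultimately show "hd vs = vs ! 0" "last vs = vs ! length es"
    by (simp_all add: hd_conv_nth last_conv_nth)
qed

lemma is_mg_path_ends_subset:
  assumes "is_mg_path ends KE vs es"
  shows "\<forall>f \<in> set es. ends f \<subseteq> set vs"
proof
  fix f assume "f \<in> set es"
  then obtain i where "i < length es" "es ! i = f"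
    by (auto simp: in_set_conv_nth)
  with assms show "ends f \<subseteq> set vs"
    by (auto simp: is_mg_path_def nth_mem)
qed

lemma is_mg_path_rev:
  assumes "is_mg_path ends KE vs es"
  shows "is_mg_path ends KE (rev vs) (rev es)"
proof -
  let ?n = "length es"
  have "ends (rev es ! i) = {rev vs ! i, rev vs ! (i + 1)}" if "i < ?n" for i
  proof -
    have "Suc (?n - Suc i) = ?n - i"
      using that by arith
    moreover have "ends (es ! (?n - Suc i)) = {vs ! (?n - Suc i), vs ! Suc (?n - Suc i)}"
      using assms that unfolding is_mg_path_def by simp
    ultimately show ?thesis
      using assms that unfolding is_mg_path_def by (simp add: rev_nth insert_commute)
  qed
  with assms show ?thesis
    unfolding is_mg_path_def by simp
qed

lemma is_mg_path_snoc:
  assumes "is_mg_path ends KE vs es" "w \<notin> set vs" "e \<in> KE" "e \<notin> set es"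
    "ends e = {last vs, w}"
  shows "is_mg_path ends KE (vs @ [w]) (es @ [e])"
  using assms is_mg_path_hd_last(2)[OF assms(1)] unfolding is_mg_path_def
  by (auto simp: nth_append less_Suc_eq)

locale properly_two_coloured_multigraph =
  fixes V :: "'v set" and KE :: "(nat \<times> 'c) set" and ends :: "nat \<times> 'c \<Rightarrow> 'v set"
  assumes finite_V: "finite V"
    and ends_doubleton: "e \<in> KE \<Longrightarrow> \<exists>x y. x \<noteq> y \<and> ends e = {x, y} \<and> x \<in> V \<and> y \<in> V"
    and colour_range: "e \<in> KE \<Longrightarrow> fst e \<in> {1, 2}"
    and colour_proper:
      "\<lbrakk>e1 \<in> KE; e2 \<in> KE; x \<in> ends e1; x \<in> ends e2; fst e1 = fst e2\<rbrakk> \<Longrightarrow> e1 = e2"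
begin

abbreviation mg_adj :: "('v \<times> 'v) set" where
  "mg_adj \<equiv> {(x, y). \<exists>e \<in> KE. ends e = {x, y}}"

abbreviation mg_comps :: "'v set set" where
  "mg_comps \<equiv> mg_components V KE ends"

lemma at_most_two_edges_at_vertex:
  assumes "e1 \<in> KE" "e2 \<in> KE" "e1 \<noteq> e2" "x \<in> ends e1" "x \<in> ends e2" "f \<in> KE" "x \<in> ends f"
  shows "f = e1 \<or> f = e2"
proof -
  have "fst e1 \<noteq> fst e2"
    using assms colour_proper by blast
  then have "fst f = fst e1 \<or> fst f = fst e2"
    using colour_range[OF assms(1)] colour_range[OF assms(2)] colour_range[OF assms(6)] by auto
  then show ?thesis
    using assms colour_proper by blast
qed

lemma mg_path_interior_edge:
  assumes path: "is_mg_path ends KE vs es" and "0 < k" "k < length es"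
    and "f \<in> KE" "vs ! k \<in> ends f"
  shows "f \<in> set es"
proof -
  have "Suc (k - 1) = k" "k - 1 < length es"
    using assms(2,3) by simp_all
  then have "f = es ! (k - 1) \<or> f = es ! k"
    using path assms(3-5) is_mg_path_nth[OF path]
    by (intro at_most_two_edges_at_vertex)
       (auto simp: is_mg_path_def nth_eq_iff_index_eq)
  then show ?thesis
    using assms(3) by auto
qed

lemma mg_path_alternates:
  assumes path: "is_mg_path ends KE vs es" and "i + 1 < length es"
  shows "fst (es ! i) \<noteq> fst (es ! (i + 1))"
proof
  assume "fst (es ! i) = fst (es ! (i + 1))"
  then have "es ! i = es ! (i + 1)"
    using is_mg_path_nth[OF path, of i] is_mg_path_nth[OF path, of "i + 1"] assms(2)
    by (intro colour_proper) auto
  with path assms(2) show False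
    by (simp add: is_mg_path_def nth_eq_iff_index_eq)
qed

lemma sym_mg_adj: "sym mg_adj"
  by (auto simp: sym_def insert_commute)

lemma mg_component_eq:
  assumes "C \<in> mg_comps" "x \<in> C"
  shows "C = {w \<in> V. (x, w) \<in> mg_adj\<^sup>*}"
  using assms rtrancl_class_eq[OF sym_mg_adj] unfolding mg_components_def by blast

lemma other_end_exists:
  assumes "e \<in> KE" "x \<in> ends e"
  obtains y where "y \<noteq> x" "ends e = {x, y}" "y \<in> V"
proof -
  obtain p q where pq: "p \<noteq> q" "ends e = {p, q}" "p \<in> V" "q \<in> V"
    using ends_doubleton[OF assms(1)] by blast
  show thesis
  proof (cases "x = p")
    case True
    with pq show thesis
      using that[of q] by blast
  next
    case False
    with pq assms(2) show thesis
      using that[of p] by (auto simp: insert_commute)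
  qed
qed

lemma mg_component_edge_closed:
  assumes "C \<in> mg_comps" "x \<in> C" "e \<in> KE" "x \<in> ends e"
  shows "ends e \<subseteq> C"
proof -
  obtain y where "ends e = {x, y}" "y \<in> V"
    using other_end_exists[OF assms(3,4)] by blast
  moreover from this have "(x, y) \<in> mg_adj"
    using assms(3) by blast
  ultimately show ?thesis
    using mg_component_eq[OF assms(1,2)] assms(2) by auto
qed

lemma finite_mg_component: "C \<in> mg_comps \<Longrightarrow> finite C"
  using finite_V unfolding mg_components_def by auto

lemma saturated_subgraph_is_mg_component:
  assumes C: "C \<in> mg_comps" and "set vs \<subseteq> C" "vs \<noteq> []" "set es \<subseteq> KE"
    and ends_in: "\<forall>f \<in> set es. ends f \<subseteq> set vs"
    and saturated: "\<forall>x \<in> set vs. \<forall>f \<in> KE. x \<in> ends f \<longrightarrow> f \<in> set es"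
  shows "set vs = C" "set es = {e \<in> KE. ends e \<subseteq> C}"
proof -
  obtain v where v: "v \<in> set vs"
    using assms(3) by (cases vs) auto
  have "w \<in> set vs" if "(v, w) \<in> mg_adj\<^sup>*" for w
    using that
  proof (induction rule: rtrancl_induct)
    case (step y z)
    then obtain f where "f \<in> KE" "ends f = {y, z}"
      by blast
    with step.IH show ?case
      using saturated ends_in by blast
  qed (rule v)
  then show vs: "set vs = C"
    using mg_component_eq[OF C, of v] v assms(2) by auto
  show "set es = {e \<in> KE. ends e \<subseteq> C}"
  proof (intro set_eqI iffI)
    fix e assume e: "e \<in> {e \<in> KE. ends e \<subseteq> C}"
    then obtain x y where "ends e = {x, y}"
      using ends_doubleton by blast
    with e vs have "x \<in> set vs" "e \<in> KE" "x \<in> ends e"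
      by auto
    then show "e \<in> set es"
      using saturated by blast
  qed (use assms(4) ends_in vs in auto)
qed

definition longest_mg_path_in :: "'v set \<Rightarrow> 'v list \<Rightarrow> (nat \<times> 'c) list \<Rightarrow> bool" where
  "longest_mg_path_in C vs es \<longleftrightarrow> is_mg_path ends KE vs es \<and> set vs \<subseteq> C \<and>
     (\<forall>vs' es'. is_mg_path ends KE vs' es' \<and> set vs' \<subseteq> C \<longrightarrow> length es' \<le> length es)"

lemma longest_mg_path_exists:
  assumes C: "C \<in> mg_comps"
  shows "\<exists>vs es. longest_mg_path_in C vs es"
proof -
  define P where "P = (\<lambda>(vs, es). is_mg_path ends KE vs es \<and> set vs \<subseteq> C)"
  obtain a where "a \<in> C"
    using C unfolding mg_components_def by blast
  then have start: "P ([a], [])"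
    unfolding P_def is_mg_path_def by simp
  have bound: "\<forall>p. P p \<longrightarrow> length (snd p) < card C + 1"
  proof (intro allI impI)
    fix p assume "P p"
    then obtain vs es where p: "p = (vs, es)" "distinct vs" "length vs = length es + 1"
      "set vs \<subseteq> C"
      unfolding P_def is_mg_path_def by (cases p) auto
    then have "card (set vs) \<le> card C"
      using card_mono[OF finite_mg_component[OF C]] by blast
    with p show "length (snd p) < card C + 1"
      by (simp add: distinct_card)
  qed
  obtain p where "P p" "\<forall>q. P q \<longrightarrow> length (snd q) \<le> length (snd p)"
    using ex_has_greatest_nat[OF start bound] by blast
  then have "longest_mg_path_in C (fst p) (snd p)"
    unfolding longest_mg_path_in_def P_def by (cases p) auto
  then show ?thesis
    by blast
qed

lemma longest_mg_path_in_rev: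
  "longest_mg_path_in C vs es \<Longrightarrow> longest_mg_path_in C (rev vs) (rev es)"
  by (simp add: longest_mg_path_in_def is_mg_path_rev)

lemma longest_mg_path_extra_edge_closes:
  assumes longest: "longest_mg_path_in C vs es" and C: "C \<in> mg_comps"
    and e: "e \<in> KE" "last vs \<in> ends e" "e \<notin> set es"
  shows "es \<noteq> []" "ends e = {last vs, hd vs}"
proof -
  let ?n = "length es"
  have path: "is_mg_path ends KE vs es" and "set vs \<subseteq> C"
    using longest unfolding longest_mg_path_in_def by blast+
  have len: "length vs = ?n + 1" "last vs = vs ! ?n" "hd vs = vs ! 0"
    using path is_mg_path_hd_last[OF path] by (auto simp: is_mg_path_def)
  obtain w where w: "w \<noteq> last vs" "ends e = {last vs, w}"
    using other_end_exists[OF e(1,2)] by blast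
  have "last vs \<in> C"
    using \<open>set vs \<subseteq> C\<close> len by (simp add: nth_mem subset_iff)
  then have "w \<in> C"
    using mg_component_edge_closed[OF C _ e(1,2)] w(2) by simp
  have "w \<in> set vs"
  proof (rule ccontr)
    assume "w \<notin> set vs"
    then have "is_mg_path ends KE (vs @ [w]) (es @ [e])"
      using is_mg_path_snoc[OF path] e w(2) by blast
    with longest \<open>w \<in> C\<close> show False
      unfolding longest_mg_path_in_def by fastforce
  qed
  then obtain j where j: "j < ?n + 1" "vs ! j = w"
    using len by (auto simp: in_set_conv_nth)
  have "j \<noteq> ?n"
    using j(2) w(1) len by auto
  moreover have "\<not> (0 < j \<and> j < ?n)"
    using mg_path_interior_edge[OF path _ _ e(1)] e(3) w(2) j(2) by auto
  ultimately have "j = 0" "?n \<noteq> 0"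
    using j(1) by auto
  then show "es \<noteq> []" "ends e = {last vs, hd vs}"
    using j(2) w(2) len by auto
qed

lemma mg_path_edge_at_vertex:
  assumes path: "is_mg_path ends KE vs es" and "x \<in> set vs" "f \<in> KE" "x \<in> ends f"
  shows "f \<in> set es \<or> x = hd vs \<or> x = last vs"
proof -
  obtain k where k: "k < length es + 1" "vs ! k = x"
    using assms(2) path by (auto simp: is_mg_path_def in_set_conv_nth)
  then consider "k = 0" | "k = length es" | "0 < k" "k < length es"
    by linarith
  then show ?thesis
  proof cases
    case 3
    then show ?thesis
      using mg_path_interior_edge[OF path _ _ assms(3)] k(2) assms(4) by blast
  qed (use k is_mg_path_hd_last[OF path] in auto)
qed

lemma mg_path_hd_edges:
  assumes path: "is_mg_path ends KE vs es" and "es \<noteq> []"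
    and e: "e \<in> KE" "e \<notin> set es" "hd vs \<in> ends e"
    and f: "f \<in> KE" "hd vs \<in> ends f"
  shows "f = e \<or> f \<in> set es"
proof -
  have "0 < length es"
    using assms(2) by simp
  then have "es ! 0 \<in> KE" "hd vs \<in> ends (es ! 0)" "es ! 0 \<in> set es"
    using is_mg_path_nth(1,2)[OF path] is_mg_path_hd_last(1)[OF path] by auto
  with e have "f = e \<or> f = es ! 0"
    by (intro at_most_two_edges_at_vertex[OF e(1) _ _ _ _ f]) auto
  with \<open>es ! 0 \<in> set es\<close> show ?thesis
    by auto
qed

lemma mg_path_last_edges:
  assumes path: "is_mg_path ends KE vs es" and "es \<noteq> []"
    and e: "e \<in> KE" "e \<notin> set es" "last vs \<in> ends e"
    and f: "f \<in> KE" "last vs \<in> ends f"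
  shows "f = e \<or> f \<in> set es"
proof -
  have "vs \<noteq> []"
    using path by (auto simp: is_mg_path_def)
  then show ?thesis
    using mg_path_hd_edges[OF is_mg_path_rev[OF path]] assms by (simp add: hd_rev)
qed

lemma mg_path_closing_edge_spans_cycle:
  assumes C: "C \<in> mg_comps" and path: "is_mg_path ends KE vs es" and "set vs \<subseteq> C"
    and e: "e \<in> KE" "e \<notin> set es" "es \<noteq> []" "ends e = {last vs, hd vs}"
  shows "spanned_by_cycle KE ends C"
proof -
  let ?n = "length es"
  define es' where "es' = es @ [e]"
  have len: "length vs = ?n + 1" "length es' = ?n + 1"
    using path by (simp_all add: is_mg_path_def es'_def)
  have cyc: "ends (es' ! i) = {vs ! i, vs ! ((i + 1) mod length vs)}" if "i < length es'" for i
  proof (cases "i < ?n")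
    case True
    then have "(i + 1) mod length vs = i + 1"
      using len by simp
    with True path show ?thesis
      unfolding es'_def is_mg_path_def by (simp add: nth_append)
  next
    case False
    then have "i = ?n"
      using that len by simp
    with e(4) len is_mg_path_hd_last[OF path] show ?thesis
      by (simp add: es'_def insert_commute)
  qed
  have "vs \<noteq> []"
    using len by auto
  then have ends_in: "\<forall>f \<in> set es'. ends f \<subseteq> set vs"
    using is_mg_path_ends_subset[OF path] e(4) unfolding es'_def by simp
  have saturated: "\<forall>x \<in> set vs. \<forall>f \<in> KE. x \<in> ends f \<longrightarrow> f \<in> set es'"
  proof (intro ballI impI)
    fix x f assume x: "x \<in> set vs" "f \<in> KE" "x \<in> ends f"
    show "f \<in> set es'"
      using mg_path_edge_at_vertex[OF path x] mg_path_hd_edges[OF path e(3,1,2) _ x(2)]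
        mg_path_last_edges[OF path e(3,1,2) _ x(2)] e(4) x(3)
      unfolding es'_def by auto
  qed
  have "set es' \<subseteq> KE"
    using path e(1) by (auto simp: is_mg_path_def es'_def)
  note component = saturated_subgraph_is_mg_component[OF C assms(3) \<open>vs \<noteq> []\<close> this ends_in saturated]
  moreover have "distinct vs" "distinct es'"
    using path e(2) by (simp_all add: is_mg_path_def es'_def)
  moreover have "2 \<le> length vs"
    using len e(3) by (cases es) simp_all
  ultimately show ?thesis
    unfolding spanned_by_cycle_def using cyc len by (intro exI[of _ vs] exI[of _ es']) simp
qed

lemma saturated_mg_path_spans_alternating_path:
  assumes C: "C \<in> mg_comps" and path: "is_mg_path ends KE vs es" and "set vs \<subseteq> C"
    and at_hd: "\<And>e. e \<in> KE \<Longrightarrow> hd vs \<in> ends e \<Longrightarrow> e \<in> set es"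
    and at_last: "\<And>e. e \<in> KE \<Longrightarrow> last vs \<in> ends e \<Longrightarrow> e \<in> set es"
  shows "spanned_by_alternating_path KE ends C"
proof -
  have saturated: "\<forall>x \<in> set vs. \<forall>f \<in> KE. x \<in> ends f \<longrightarrow> f \<in> set es"
    using mg_path_edge_at_vertex[OF path] at_hd at_last by blast
  have "vs \<noteq> []" "set es \<subseteq> KE"
    using path by (auto simp: is_mg_path_def)
  note component = saturated_subgraph_is_mg_component[OF C assms(3) this(1,2)
      is_mg_path_ends_subset[OF path] saturated]
  with path show ?thesis
    unfolding spanned_by_alternating_path_def is_mg_path_def
    using mg_path_alternates[OF path] by (intro exI[of _ vs] exI[of _ es]) simp
qed

theorem mg_component_path_or_cycle:
  assumes C: "C \<in> mg_comps"
  shows "spanned_by_alternating_path KE ends C \<or> spanned_by_cycle KE ends C"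
proof -
  obtain vs es where longest: "longest_mg_path_in C vs es"
    using longest_mg_path_exists[OF C] by blast
  then have path: "is_mg_path ends KE vs es" and "set vs \<subseteq> C"
    unfolding longest_mg_path_in_def by blast+
  consider e where "e \<in> KE" "last vs \<in> ends e" "e \<notin> set es"
    | e where "e \<in> KE" "hd vs \<in> ends e" "e \<notin> set es"
    | "\<And>e. e \<in> KE \<Longrightarrow> hd vs \<in> ends e \<Longrightarrow> e \<in> set es"
      "\<And>e. e \<in> KE \<Longrightarrow> last vs \<in> ends e \<Longrightarrow> e \<in> set es"
    by blast
  then show ?thesis
  proof cases
    case (1 e)
    then show ?thesis
      using longest_mg_path_extra_edge_closes[OF longest C]
        mg_path_closing_edge_spans_cycle[OF C path \<open>set vs \<subseteq> C\<close>] by blast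
  next
    case (2 e)
    have "vs \<noteq> []"
      using path by (auto simp: is_mg_path_def)
    with 2 have "last (rev vs) \<in> ends e" "e \<notin> set (rev es)"
      by (simp_all add: last_rev)
    with longest_mg_path_extra_edge_closes[OF longest_mg_path_in_rev[OF longest] C \<open>e \<in> KE\<close>]
    show ?thesis
      using mg_path_closing_edge_spans_cycle[OF C is_mg_path_rev[OF path] _ \<open>e \<in> KE\<close>]
        \<open>set vs \<subseteq> C\<close> by auto
  next
    case 3
    then show ?thesis
      using saturated_mg_path_spans_alternating_path[OF C path \<open>set vs \<subseteq> C\<close>] by blast
  qed
qed

end

lemma meta_graph_properly_two_coloured:
  assumes "finite V"
  shows "properly_two_coloured_multigraph V (meta_edges V H) (meta_ends V H)"
proof
  show "finite V"
    by fact
  show "\<exists>x y. x \<noteq> y \<and> meta_ends V H e = {x, y} \<and> x \<in> V \<and> y \<in> V"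
    if "e \<in> meta_edges V H" for e
    using that by (rule meta_ends_doubleton)
  show "fst e \<in> {1, 2}" if "e \<in> meta_edges V H" for e
    using that unfolding meta_edges_def by (cases e) simp
  show "e1 = e2"
    if "x \<in> meta_ends V H e1" "x \<in> meta_ends V H e2" "fst e1 = fst e2" for e1 e2 x
    using that by (rule meta_edges_eq_if_same_label)
qed

theorem mainTheorem6:
  fixes V :: "'v set" and E1 E2 :: "('v \<times> 'v) set"
    and M1 M2 Mh1 Mh2 :: "'v side set set"
  assumes "finite V" and "E1 \<subseteq> V \<times> V" and "E2 \<subseteq> V \<times> V"
    and "is_matching E1 M1" and "is_matching E1 Mh1"
    and "is_matching E2 M2" and "is_matching E2 Mh2"
    and "card M1 = card Mh1" and "card M2 = card Mh2"
  defines "H \<equiv> (\<lambda>l::nat. if l = 1 then symdiff M1 Mh1 else symdiff M2 Mh2)"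
  defines "KE \<equiv> meta_edges V H" and "ends \<equiv> meta_ends V H"
  shows "\<forall>C \<in> mg_components V KE ends.
     (\<exists>vs es. distinct vs \<and> set vs = C \<and> distinct es
        \<and> set es = {e \<in> KE. ends e \<subseteq> C} \<and> length vs = length es + 1
        \<and> (\<forall>i < length es. ends (es ! i) = {vs ! i, vs ! (i + 1)})
        \<and> (\<forall>i. i + 1 < length es \<longrightarrow> fst (es ! i) \<noteq> fst (es ! (i + 1))))
   \<or> (\<exists>vs es. distinct vs \<and> set vs = C \<and> distinct es
        \<and> set es = {e \<in> KE. ends e \<subseteq> C} \<and> length vs = length es \<and> 2 \<le> length vs
        \<and> (\<forall>i < length es. ends (es ! i) = {vs ! i, vs ! ((i + 1) mod length vs)}))"
proof -
  interpret properly_two_coloured_multigraph V KE ends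
    unfolding KE_def ends_def using assms(1) by (rule meta_graph_properly_two_coloured)
  show ?thesis
    using mg_component_path_or_cycle
    unfolding spanned_by_alternating_path_def spanned_by_cycle_def by (intro ballI)
qed

end
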